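(* Let $H\in\mathbb{R}^{n\times d}$, $\Sigma\in\mathbb{R}^{n\times n}$ symmetric positive definite, $y\in\mathbb{R}^n$, $J\ge2$, and let $v_i^{(j)}$ be deterministic EKI iterates $$v_{i+1}^{(j)}=v_i^{(j)}+\Gamma_iH^\top(H\Gamma_iH^\top+\Sigma)^{-1}(y-Hv_i^{(j)}),$$ with $\Gamma_i$ the empirical ensemble covariance. Let $v^*=(H^\top\Sigma^{-1}H)^\dagger H^\top\Sigma^{-1}y$ and $\omega_i^{(j)}=v_i^{(j)}-v^*$. Then for all $i\ge0$, $\omega_{i+1}^{(j)}=\mathbb{M}_i\omega_i^{(j)}$ with $\mathbb{M}_i=(I+\Gamma_iH^\top\Sigma^{-1}H)^{-1}$.
   Context: Empirical covariance $\Gamma_i=\frac1{J-1}\sum_j(v_i^{(j)}-\bar v_i)(v_i^{(j)}-\bar v_i)^\top$, $\bar v_i=\frac1J\sum_jv_i^{(j)}$; $\dagger$ denotes the Moore–Penrose pseudoinverse. *)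

theory Defs
  imports "HOL-Analysis.Analysis"
begin

definition pinv :: "real^'n^'m \<Rightarrow> real^'m^'n" where
  "pinv A = (THE X. A ** X ** A = A \<and> X ** A ** X = X \<and>
                    transpose (A ** X) = A ** X \<and> transpose (X ** A) = X ** A)"

definition outer :: "real^'n \<Rightarrow> real^'m \<Rightarrow> real^'m^'n" where
  "outer x y = (\<chi> i k. x $ i * y $ k)"

definition ens_mean :: "('j::finite \<Rightarrow> real^'d) \<Rightarrow> real^'d" where
  "ens_mean u = (1 / real CARD('j)) *\<^sub>R (\<Sum>j\<in>UNIV. u j)"

definition ens_cov :: "('j::finite \<Rightarrow> real^'d) \<Rightarrow> real^'d^'d" where
  "ens_cov u = (1 / (real CARD('j) - 1)) *\<^sub>R
      (\<Sum>j\<in>UNIV. outer (u j - ens_mean u) (u j - ens_mean u))"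

definition sym_pos_def_mat :: "real^'n^'n \<Rightarrow> bool" where
  "sym_pos_def_mat S \<longleftrightarrow> transpose S = S \<and> (\<forall>x. x \<noteq> 0 \<longrightarrow> x \<bullet> (S *v x) > 0)"

end

theory Submission
  imports Defs
begin

text \<open>The EKI step is a Kalman-type update \<open>v \<mapsto> v + K (y - H v)\<close> with gain
  \<open>K = \<Gamma> H\<^sup>T (H \<Gamma> H\<^sup>T + \<Sigma>)\<^sup>-\<^sup>1\<close>. The push-through identity
  \<open>(I + \<Gamma> H\<^sup>T \<Sigma>\<^sup>-\<^sup>1 H) \<Gamma> H\<^sup>T = \<Gamma> H\<^sup>T \<Sigma>\<^sup>-\<^sup>1 (H \<Gamma> H\<^sup>T + \<Sigma>)\<close>
  turns the gain into \<open>K = M \<Gamma> H\<^sup>T \<Sigma>\<^sup>-\<^sup>1\<close>.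
  The column space of \<open>H\<^sup>T\<close> lies in that of the Gram matrix \<open>A = H\<^sup>T \<Sigma>\<^sup>-\<^sup>1 H\<close>,
  so \<open>v\<^sup>*\<close> solves the normal equations \<open>A v\<^sup>* = H\<^sup>T \<Sigma>\<^sup>-\<^sup>1 y\<close>.
  Hence \<open>K (y - H v) = - M \<Gamma> A \<omega>\<close>, and the new error is
  \<open>(I - M \<Gamma> A) \<omega> = M (M\<^sup>-\<^sup>1 - \<Gamma> A) \<omega> = M \<omega>\<close>.
  Both inverses exist because \<open>\<Sigma>\<close> is positive definite and \<open>\<Gamma>\<close> positive
  semidefinite. That \<open>pinv\<close> satisfies the Penrose equations at all is shown by
  building a pseudo-inverse from the orthogonal projections onto the row and
  column spaces.\<close>

lemma inner_matrix_vector_mult_transpose: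
  "x \<bullet> ((A::real^'n^'m) *v y) = (transpose A *v x) \<bullet> y"
  by (simp add: dot_lmul_matrix)

declare transpose_matrix_vector [simp del]

lemma matrix_vector_mult_matrix: "linear (f::real^'n \<Rightarrow> real^'m) \<Longrightarrow> matrix f *v x = f x"
  by (simp add: matrix_works)

lemma matrix_add_rdistrib: "(A + B) ** C = A ** C + B ** (C::real^'p^'n)"
  by (vector matrix_matrix_mult_def sum.distrib distrib_right)

definition is_orthogonal_projection :: "real^'n^'n \<Rightarrow> (real^'n) set \<Rightarrow> bool" where
  "is_orthogonal_projection P S \<longleftrightarrow>
     (\<forall>x. P *v x \<in> S \<and> (\<forall>w\<in>S. orthogonal (x - P *v x) w))"

lemma orthogonal_projection_exists:
  fixes S :: "(real^'n) set"
  assumes "subspace S"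
  obtains P where "is_orthogonal_projection P S"
proof -
  obtain B where orth: "pairwise orthogonal B" and span_B: "span B = S"
    using orthogonal_basis_subspace[OF assms] by metis
  define p where "p x = (\<Sum>b\<in>B. (b \<bullet> x / (b \<bullet> b)) *\<^sub>R b)" for x :: "real^'n"
  have lin: "linear p"
  proof (rule linearI)
    show "p (x + y) = p x + p y" for x y
      by (simp add: p_def inner_add_right add_divide_distrib scaleR_add_left sum.distrib)
    show "p (c *\<^sub>R x) = c *\<^sub>R p x" for c x
      by (simp add: p_def scaleR_sum_right)
  qed
  have "p x \<in> S" for x
  proof -
    have "p x \<in> span B"
      unfolding p_def by (intro span_sum span_mul span_base)
    then show ?thesis using span_B by simp
  qed
  moreover have "orthogonal (x - p x) w" if "w \<in> S" for x w
  proof -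
    have "orthogonal w (x - p x)"
      unfolding p_def by (rule Gram_Schmidt_step[OF orth]) (use span_B that in simp)
    then show ?thesis by (simp add: orthogonal_commute)
  qed
  ultimately have "is_orthogonal_projection (matrix p) S"
    unfolding is_orthogonal_projection_def matrix_vector_mult_matrix[OF lin] by blast
  then show thesis by (rule that)
qed

lemma orthogonal_projection_fixes:
  assumes "is_orthogonal_projection P S" "subspace S" "w \<in> S"
  shows "P *v w = w"
proof -
  have "w - P *v w \<in> S"
    using assms by (simp add: is_orthogonal_projection_def subspace_diff)
  then have "orthogonal (w - P *v w) (w - P *v w)"
    using assms(1) by (simp add: is_orthogonal_projection_def)
  then show ?thesis by (simp add: orthogonal_self)
qed

lemma orthogonal_projection_symmetric:
  assumes "is_orthogonal_projection P S"
  shows "transpose P = P"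
proof -
  have inner_P: "(P *v x) \<bullet> y = (P *v x) \<bullet> (P *v y)" for x y
  proof -
    have "orthogonal (y - P *v y) (P *v x)"
      using assms by (simp add: is_orthogonal_projection_def)
    then show ?thesis by (simp add: orthogonal_def inner_diff_right inner_commute)
  qed
  have "x \<bullet> (transpose P *v y) = x \<bullet> (P *v y)" for x y
  proof -
    have "x \<bullet> (transpose P *v y) = (P *v x) \<bullet> (P *v y)"
      using inner_P[of x y] by (simp add: inner_matrix_vector_mult_transpose)
    also have "\<dots> = x \<bullet> (P *v y)"
      using inner_P[of y x] by (simp add: inner_commute)
    finally show ?thesis .
  qed
  then have "(transpose P *v y - P *v y) \<bullet> (transpose P *v y - P *v y) = 0" for y
    by (simp only: inner_diff_right)
  then have "transpose P *v y = P *v y" for y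
    by simp
  then show ?thesis by (simp add: matrix_eq)
qed

lemma matrix_vector_mult_row_space_projection:
  fixes A :: "real^'n^'m"
  assumes "is_orthogonal_projection P (range ((*v) (transpose A)))"
  shows "A *v (P *v z) = A *v z"
proof -
  have "orthogonal (z - P *v z) (transpose A *v u)" for u
    using assms by (auto simp: is_orthogonal_projection_def)
  then have "(A *v (z - P *v z)) \<bullet> u = 0" for u
    by (simp add: orthogonal_def inner_matrix_vector_mult_transpose)
  then have "A *v (z - P *v z) = 0"
    by (metis inner_eq_zero_iff)
  then show ?thesis
    by (simp add: matrix_vector_mult_diff_distrib)
qed

lemma inj_on_row_space:
  fixes A :: "real^'n^'m"
  shows "inj_on ((*v) A) (range ((*v) (transpose A)))"
proof (rule inj_onI)
  fix x y
  assume "x \<in> range ((*v) (transpose A))" "y \<in> range ((*v) (transpose A))"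
    and eq: "A *v x = A *v y"
  then obtain u where u: "x - y = transpose A *v u"
    by (metis (no_types, lifting) imageE matrix_vector_mult_diff_distrib)
  have "(x - y) \<bullet> (x - y) = u \<bullet> (A *v (x - y))"
    by (simp add: u inner_matrix_vector_mult_transpose)
  also have "\<dots> = 0"
    using eq by (simp add: matrix_vector_mult_diff_distrib)
  finally show "x = y" by simp
qed

definition is_pseudo_inverse :: "real^'n^'m \<Rightarrow> real^'m^'n \<Rightarrow> bool" where
  "is_pseudo_inverse A X \<longleftrightarrow> A ** X ** A = A \<and> X ** A ** X = X \<and>
     transpose (A ** X) = A ** X \<and> transpose (X ** A) = X ** A"

lemma pseudo_inverse_exists:
  fixes A :: "real^'n^'m"
  obtains X where "is_pseudo_inverse A X"
proof -
  define V where "V = range ((*v) (transpose A))"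
  define W where "W = range ((*v) A)"
  have "subspace V" "subspace W"
    unfolding V_def W_def
    by (simp_all add: real_vector.linear_subspace_image[OF matrix_vector_mul_linear])
  then obtain P Q where P: "is_orthogonal_projection P V" and Q: "is_orthogonal_projection Q W"
    by (metis orthogonal_projection_exists)
  have "span V = V" using \<open>subspace V\<close> by simp
  then obtain g where "range g \<subseteq> V" "linear g" and g_left: "\<And>x. x \<in> V \<Longrightarrow> g (A *v x) = x"
    using real_vector.linear_inj_on_left_inverse[OF matrix_vector_mul_linear, of A V]
      inj_on_row_space[of A] unfolding V_def by metis
  have g_A: "g (A *v z) = P *v z" for z
    using g_left[of "P *v z"] P matrix_vector_mult_row_space_projection[of P A z]
    by (simp add: V_def is_orthogonal_projection_def)
  have Q_A: "Q *v (A *v z) = A *v z" for z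
    using orthogonal_projection_fixes[OF Q \<open>subspace W\<close>] by (simp add: W_def)
  define X where "X = matrix g ** Q"
  have X_v: "X *v b = g (Q *v b)" for b
    by (simp add: X_def matrix_vector_mul_assoc[symmetric]
        matrix_vector_mult_matrix[OF \<open>linear g\<close>])
  have XA: "X ** A = P"
    by (simp add: matrix_eq matrix_vector_mul_assoc[symmetric] X_v Q_A g_A)
  have AX: "A ** X = Q"
  proof (unfold matrix_eq, intro allI)
    fix b
    obtain u where "Q *v b = A *v u"
      using Q by (auto simp: W_def is_orthogonal_projection_def)
    then show "(A ** X) *v b = Q *v b"
      using P by (simp add: matrix_vector_mul_assoc[symmetric] X_v g_A
          matrix_vector_mult_row_space_projection V_def)
  qed
  have "A ** X ** A = A"
    by (simp add: AX matrix_eq matrix_vector_mul_assoc[symmetric] Q_A)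
  moreover have "X ** A ** X = X"
    using \<open>range g \<subseteq> V\<close> orthogonal_projection_fixes[OF P \<open>subspace V\<close>]
    by (auto simp: XA matrix_eq matrix_vector_mul_assoc[symmetric] X_v)
  ultimately show thesis
    using orthogonal_projection_symmetric[OF P] orthogonal_projection_symmetric[OF Q] AX XA
    by (intro that[of X]) (simp add: is_pseudo_inverse_def)
qed

lemma pseudo_inverse_unique:
  assumes X: "is_pseudo_inverse A X" and Y: "is_pseudo_inverse A Y"
  shows "X = Y"
proof -
  have AXA: "A ** X ** A = A" "X ** A ** X = X" "transpose (A ** X) = A ** X"
      "transpose (X ** A) = X ** A"
    using X by (simp_all add: is_pseudo_inverse_def)
  have AYA: "A ** Y ** A = A" "Y ** A ** Y = Y" "transpose (A ** Y) = A ** Y"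
      "transpose (Y ** A) = Y ** A"
    using Y by (simp_all add: is_pseudo_inverse_def)
  have AX_AY: "A ** X = A ** Y"
  proof -
    have "A ** X = transpose (A ** X)" using AXA by simp
    also have "\<dots> = transpose X ** transpose (A ** Y ** A)"
      using AYA by (simp add: matrix_transpose_mul)
    also have "\<dots> = transpose (A ** X) ** transpose (A ** Y)"
      by (simp add: matrix_transpose_mul matrix_mul_assoc)
    also have "\<dots> = A ** X ** (A ** Y)" using AXA AYA by simp
    also have "\<dots> = A ** Y" using AXA by (simp add: matrix_mul_assoc)
    finally show ?thesis .
  qed
  have XA_YA: "X ** A = Y ** A"
  proof -
    have "X ** A = transpose (X ** A)" using AXA by simp
    also have "\<dots> = transpose (A ** Y ** A) ** transpose X"
      using AYA by (simp add: matrix_transpose_mul)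
    also have "\<dots> = transpose (Y ** A) ** transpose (X ** A)"
      by (simp add: matrix_transpose_mul matrix_mul_assoc)
    also have "\<dots> = Y ** A ** (X ** A)" using AXA AYA by simp
    also have "\<dots> = Y ** A" using AXA by (metis matrix_mul_assoc)
    finally show ?thesis .
  qed
  have "X = X ** A ** X" using AXA by simp
  also have "\<dots> = Y ** A ** Y" using AX_AY XA_YA by (metis matrix_mul_assoc)
  also have "\<dots> = Y" using AYA by simp
  finally show ?thesis .
qed

lemma pinv_is_pseudo_inverse: "is_pseudo_inverse A (pinv A)"
proof -
  have "pinv A = (THE X. is_pseudo_inverse A X)"
    by (simp add: pinv_def is_pseudo_inverse_def)
  then show ?thesis
    by (metis theI' pseudo_inverse_exists pseudo_inverse_unique)
qed

lemma invertible_if_kernel_trivial: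
  fixes A :: "real^'n^'n"
  assumes "\<And>x. A *v x = 0 \<Longrightarrow> x = 0"
  shows "invertible A"
  using assms by (metis invertible_left_inverse matrix_left_invertible_ker)

lemma invertible_if_pos_def:
  fixes A :: "real^'n^'n"
  assumes "\<And>x. x \<noteq> 0 \<Longrightarrow> 0 < x \<bullet> (A *v x)"
  shows "invertible A"
  by (rule invertible_if_kernel_trivial) (metis assms inner_zero_right less_irrefl)

lemma matrix_inv_right: "invertible A \<Longrightarrow> A ** matrix_inv A = mat 1"
  and matrix_inv_left: "invertible A \<Longrightarrow> matrix_inv A ** A = mat 1"
  unfolding matrix_inv_def invertible_def by (metis (mono_tags, lifting) someI_ex)+

lemma sym_pos_def_mat_invertible: "sym_pos_def_mat S \<Longrightarrow> invertible S"
  by (simp add: sym_pos_def_mat_def invertible_if_pos_def)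

lemma sym_pos_def_mat_matrix_inv:
  assumes S: "sym_pos_def_mat S"
  shows "sym_pos_def_mat (matrix_inv S)"
proof -
  let ?T = "matrix_inv S"
  have S_sym: "transpose S = S" and S_pos: "\<And>z. z \<noteq> 0 \<Longrightarrow> 0 < z \<bullet> (S *v z)"
    using S by (simp_all add: sym_pos_def_mat_def)
  have ST: "S ** ?T = mat 1" "?T ** S = mat 1"
    using sym_pos_def_mat_invertible[OF S] by (simp_all add: matrix_inv_right matrix_inv_left)
  have "transpose ?T = transpose ?T ** (S ** ?T)"
    using ST by simp
  also have "\<dots> = transpose (S ** ?T) ** ?T"
    using S_sym by (simp add: matrix_transpose_mul matrix_mul_assoc)
  also have "\<dots> = ?T" using ST by simp
  finally have "transpose ?T = ?T" .
  moreover have "0 < x \<bullet> (?T *v x)" if "x \<noteq> 0" for x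
  proof -
    have x: "x = S *v (?T *v x)"
      using ST by (simp add: matrix_vector_mul_assoc)
    then have "?T *v x \<noteq> 0" using \<open>x \<noteq> 0\<close> by auto
    then have "0 < (?T *v x) \<bullet> (S *v (?T *v x))" by (rule S_pos)
    then show ?thesis by (subst (asm) x[symmetric]) (simp add: inner_commute)
  qed
  ultimately show ?thesis by (simp add: sym_pos_def_mat_def)
qed

lemma outer_mult_vector: "outer a b *v x = (b \<bullet> x) *\<^sub>R a"
  by (simp add: outer_def matrix_vector_mult_def inner_vec_def vec_eq_iff sum_distrib_left mult_ac)

lemma sum_matrix_vector_mult: "(\<Sum>j\<in>J. M j) *v x = (\<Sum>j\<in>J. M j *v x)"
  by (induction J rule: infinite_finite_induct) (simp_all add: matrix_vector_mult_add_rdistrib)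

text \<open>No assumption on the ensemble size is needed: for a single member the normalisation
  \<open>1 / (J - 1)\<close> is \<open>1 / 0 = 0\<close>.\<close>

lemma ens_cov_pos_semidef:
  fixes u :: "'j::finite \<Rightarrow> real^'d"
  shows "0 \<le> x \<bullet> (ens_cov u *v x)"
proof -
  have "x \<bullet> (ens_cov u *v x) =
      (1 / (real CARD('j) - 1)) * (\<Sum>j\<in>UNIV. ((u j - ens_mean u) \<bullet> x)\<^sup>2)"
    by (simp add: ens_cov_def scaleR_matrix_vector_assoc[symmetric] sum_matrix_vector_mult
        outer_mult_vector inner_sum_right inner_commute power2_eq_square)
  moreover have "0 \<le> 1 / (real CARD('j) - 1)"
    using card_ge_0_finite[of "UNIV :: 'j set"] by simp
  ultimately show ?thesis by (simp add: sum_nonneg)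
qed

lemma inner_weighted_gram:
  fixes H :: "real^'d^'n" and W :: "real^'n^'n"
  shows "x \<bullet> ((transpose H ** W ** H) *v x) = (H *v x) \<bullet> (W *v (H *v x))"
  by (simp only: matrix_vector_mul_assoc[symmetric] transpose_transpose
      inner_matrix_vector_mult_transpose[of x "transpose H"])

lemma weighted_gram_kernel:
  assumes W: "sym_pos_def_mat W" and q: "(transpose H ** W ** H) *v q = 0"
  shows "H *v q = 0"
proof (rule ccontr)
  assume "H *v q \<noteq> 0"
  then have "0 < (H *v q) \<bullet> (W *v (H *v q))"
    using W by (simp add: sym_pos_def_mat_def)
  with q show False by (simp flip: inner_weighted_gram)
qed

lemma weighted_gram_ginv_fixes_transpose:
  fixes H :: "real^'d^'n"
  assumes W: "sym_pos_def_mat W" and A: "A = transpose H ** W ** H" and X: "A ** X ** A = A"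
  shows "A ** X ** transpose H = transpose H"
proof -
  have A_sym: "transpose A = A"
    using W by (simp add: A sym_pos_def_mat_def matrix_transpose_mul matrix_mul_assoc)
  have AXtA: "A ** transpose X ** A = A"
    using X A_sym by (metis matrix_transpose_mul matrix_mul_assoc)
  have "H *v (u - (transpose X ** A) *v u) = 0" for u
  proof (rule weighted_gram_kernel[OF W])
    show "(transpose H ** W ** H) *v (u - (transpose X ** A) *v u) = 0"
      using AXtA by (simp add: A[symmetric] matrix_vector_mult_diff_distrib
          matrix_vector_mul_assoc matrix_mul_assoc)
  qed
  then have "H ** transpose X ** A = H"
    by (simp add: matrix_eq matrix_vector_mult_diff_distrib matrix_vector_mul_assoc matrix_mul_assoc)
  then have "transpose (H ** transpose X ** A) = transpose H" by simp
  then show ?thesis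
    by (simp add: matrix_transpose_mul A_sym matrix_mul_assoc)
qed

lemma pinv_weighted_normal_equation:
  assumes "sym_pos_def_mat W"
  shows "(transpose H ** W ** H) *v ((pinv (transpose H ** W ** H) ** transpose H ** W) *v y)
    = (transpose H ** W) *v y"
proof -
  have "transpose H ** W ** H ** pinv (transpose H ** W ** H) ** transpose H = transpose H"
    using pinv_is_pseudo_inverse[of "transpose H ** W ** H"]
    by (intro weighted_gram_ginv_fixes_transpose[OF assms refl]) (simp add: is_pseudo_inverse_def)
  then show ?thesis
    by (metis matrix_vector_mul_assoc matrix_mul_assoc)
qed

lemma invertible_sandwich_add_pos_def:
  fixes H :: "real^'d^'n" and S :: "real^'n^'n"
  assumes C: "\<And>x. 0 \<le> x \<bullet> (C *v x)" and S: "sym_pos_def_mat S"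
  shows "invertible (H ** C ** transpose H + S)"
proof (rule invertible_if_pos_def)
  fix x :: "real^'n" assume "x \<noteq> 0"
  have "x \<bullet> ((H ** C ** transpose H + S) *v x)
      = (transpose H *v x) \<bullet> (C *v (transpose H *v x)) + x \<bullet> (S *v x)"
    by (simp add: matrix_vector_mult_add_rdistrib inner_add_right
        matrix_vector_mul_assoc[symmetric] inner_matrix_vector_mult_transpose)
  moreover have "0 < x \<bullet> (S *v x)"
    using S \<open>x \<noteq> 0\<close> by (simp add: sym_pos_def_mat_def)
  ultimately show "0 < x \<bullet> ((H ** C ** transpose H + S) *v x)"
    using C[of "transpose H *v x"] by linarith
qed

lemma invertible_identity_add_mult_weighted_gram:
  assumes C: "\<And>x. 0 \<le> x \<bullet> (C *v x)" and W: "sym_pos_def_mat W"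
  shows "invertible (mat 1 + C ** transpose H ** W ** H)"
proof (rule invertible_if_kernel_trivial)
  fix x assume "(mat 1 + C ** transpose H ** W ** H) *v x = 0"
  define A where "A = transpose H ** W ** H"
  have x: "x = - (C *v (A *v x))"
    using \<open>(mat 1 + C ** transpose H ** W ** H) *v x = 0\<close>
    by (simp add: A_def matrix_vector_mult_add_rdistrib matrix_vector_mul_assoc matrix_mul_assoc
        add_eq_0_iff)
  have "x \<bullet> (A *v x) = - ((A *v x) \<bullet> (C *v (A *v x)))"
    by (subst (1) x) (simp add: inner_commute)
  then have "x \<bullet> (A *v x) \<le> 0"
    using C[of "A *v x"] by linarith
  moreover have "0 \<le> (H *v x) \<bullet> (W *v (H *v x))"
    using W by (cases "H *v x = 0") (auto simp: sym_pos_def_mat_def less_imp_le)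
  ultimately have "(H *v x) \<bullet> (W *v (H *v x)) = 0"
    by (simp add: A_def inner_weighted_gram)
  then have "H *v x = 0"
    using W by (metis sym_pos_def_mat_def less_irrefl)
  then have "A *v x = 0"
    by (simp add: A_def matrix_vector_mul_assoc[symmetric])
  then show "x = 0" using x by simp
qed

lemma push_through_matrix_inv:
  fixes K :: "real^'n^'d" and H :: "real^'d^'n" and S :: "real^'n^'n"
  assumes S: "invertible S" and HKS: "invertible (H ** K + S)"
    and N: "invertible (mat 1 + K ** matrix_inv S ** H)"
  shows "K ** matrix_inv (H ** K + S) = matrix_inv (mat 1 + K ** matrix_inv S ** H) ** K ** matrix_inv S"
proof -
  let ?N = "mat 1 + K ** matrix_inv S ** H"
  have push: "?N ** K = K ** matrix_inv S ** (H ** K + S)"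
    using matrix_inv_left[OF S]
    by (simp add: matrix_add_ldistrib matrix_add_rdistrib matrix_mul_assoc[symmetric] add.commute)
  have "K ** matrix_inv (H ** K + S) = matrix_inv ?N ** (?N ** K) ** matrix_inv (H ** K + S)"
    using matrix_inv_left[OF N] by (simp add: matrix_mul_assoc)
  also have "\<dots> = matrix_inv ?N ** (K ** matrix_inv S ** (H ** K + S)) ** matrix_inv (H ** K + S)"
    by (simp only: push)
  also have "\<dots> = matrix_inv ?N ** K ** matrix_inv S"
    using matrix_inv_right[OF HKS] by (simp add: matrix_mul_assoc[symmetric])
  finally show ?thesis .
qed

lemma kalman_update_error:
  fixes C :: "real^'d^'d" and H :: "real^'d^'n" and S :: "real^'n^'n"
  assumes S: "invertible S" and HCS: "invertible (H ** C ** transpose H + S)"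
    and N: "invertible (mat 1 + C ** transpose H ** matrix_inv S ** H)"
    and normal: "(transpose H ** matrix_inv S ** H) *v vs = (transpose H ** matrix_inv S) *v y"
  shows "v + (C ** transpose H ** matrix_inv (H ** C ** transpose H + S)) *v (y - H *v v) - vs
    = matrix_inv (mat 1 + C ** transpose H ** matrix_inv S ** H) *v (v - vs)"
proof -
  define A where "A = transpose H ** matrix_inv S ** H"
  define M where "M = matrix_inv (mat 1 + C ** transpose H ** matrix_inv S ** H)"
  have gain: "C ** transpose H ** matrix_inv (H ** C ** transpose H + S)
      = M ** C ** transpose H ** matrix_inv S"
    using push_through_matrix_inv[of S H "C ** transpose H"] S HCS N
    by (simp add: M_def matrix_mul_assoc)
  have "(C ** transpose H ** matrix_inv (H ** C ** transpose H + S)) *v (y - H *v v)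
      = M *v (C *v ((transpose H ** matrix_inv S) *v y - A *v v))"
    by (simp add: gain A_def matrix_vector_mul_assoc matrix_vector_mult_diff_distrib matrix_mul_assoc)
  also have "\<dots> = - (M *v (C *v (A *v (v - vs))))"
    using normal by (simp add: A_def matrix_vector_mult_diff_distrib)
  finally have update: "(C ** transpose H ** matrix_inv (H ** C ** transpose H + S)) *v (y - H *v v)
      = - (M *v (C *v (A *v (v - vs))))" .
  have "v - vs = M *v ((mat 1 + C ** A) *v (v - vs))"
    using matrix_inv_left[OF N]
    by (simp add: M_def A_def matrix_vector_mul_assoc matrix_mul_assoc)
  also have "\<dots> = M *v (v - vs) + M *v (C *v (A *v (v - vs)))"
    by (simp add: matrix_vector_mult_add_rdistrib matrix_vector_right_distrib
        matrix_vector_mul_assoc)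
  finally have error_split: "v - vs = M *v (v - vs) + M *v (C *v (A *v (v - vs)))" .
  have "v + (C ** transpose H ** matrix_inv (H ** C ** transpose H + S)) *v (y - H *v v) - vs
      = (v - vs) - M *v (C *v (A *v (v - vs)))"
    by (simp only: update) (simp add: algebra_simps)
  also have "\<dots> = M *v (v - vs)"
    using error_split by (metis add_diff_cancel_right')
  finally show ?thesis by (simp only: M_def)
qed

theorem proposition3p12:
  fixes H :: "real^'d^'n" and \<Sigma> :: "real^'n^'n" and y :: "real^'n"
    and v :: "nat \<Rightarrow> 'j::finite \<Rightarrow> real^'d"
  assumes J2: "CARD('j) \<ge> 2"
    and SPD: "sym_pos_def_mat \<Sigma>"
    and EKI: "\<And>i j. v (Suc i) j = v i j +
        (ens_cov (v i) ** transpose H **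
           matrix_inv (H ** ens_cov (v i) ** transpose H + \<Sigma>)) *v (y - H *v v i j)"
  shows "\<forall>i j.
    (let vstar = (pinv (transpose H ** matrix_inv \<Sigma> ** H) ** transpose H ** matrix_inv \<Sigma>) *v y;
         M = matrix_inv (mat 1 + ens_cov (v i) ** transpose H ** matrix_inv \<Sigma> ** H)
     in v (Suc i) j - vstar = M *v (v i j - vstar))"
proof -
  have W: "sym_pos_def_mat (matrix_inv \<Sigma>)"
    using SPD by (rule sym_pos_def_mat_matrix_inv)
  show ?thesis
    unfolding Let_def EKI
  proof (intro allI kalman_update_error)
    fix i
    have C: "0 \<le> x \<bullet> (ens_cov (v i) *v x)" for x
      by (rule ens_cov_pos_semidef)
    show "invertible \<Sigma>"
      using SPD by (rule sym_pos_def_mat_invertible)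
    show "invertible (H ** ens_cov (v i) ** transpose H + \<Sigma>)"
      using C SPD by (rule invertible_sandwich_add_pos_def)
    show "invertible (mat 1 + ens_cov (v i) ** transpose H ** matrix_inv \<Sigma> ** H)"
      using C W by (rule invertible_identity_add_mult_weighted_gram)
  qed (rule pinv_weighted_normal_equation[OF W])
qed

end
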